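(* Let $(\Omega,\mathcal F,\mathbb P)$ be a nonatomic probability space, $X$ an integrable random vector in $\mathbb R^N$ with $\mathbb E(X)=0$, and $Y$ a square-integrable random vector in $\mathbb R^d$. Let $\mu$ be the uniform measure on $[0,1]^d$. Suppose there exist functions $\varphi:[0,1]^d\to\mathbb R$ and $b:[0,1]^d\to\mathbb R^N$ and a random vector $U$ such that (i) for $m$-a.e. $x$ (where $m=\mathrm{Law}(X)$), the map $u\mapsto \varphi(u)+b(u)\cdot x$ is convex and smooth on $[0,1]^d$; (ii) $\mathrm{Law}(U)=\mu$ and $\mathbb E(X\mid U)=0$; (iii) $Y=\nabla\varphi(U)+Db(U)^T X$ almost surely, where $Db$ is the Jacobian matrix of $b$. Then $U$ solves the problem $$\max\{\mathbb E(V\cdot Y)\;:\;\mathrm{Law}(V)=\mu,\ \mathbb E(X\mid V)=0\}.$$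
   Context: $\mathbb E(X\mid V)=0$ means that $X$ is mean-independent of $V$. Note that $\nabla\varphi(u)+Db(u)^Tx$ is the gradient in $u$ of $u\mapsto\varphi(u)+b(u)\cdot x$. *)

theory Defs
  imports "HOL-Analysis.Analysis" "HOL-Probability.Probability"
begin

definition nonatomic :: "'a measure \<Rightarrow> bool" where
  "nonatomic M \<longleftrightarrow> (\<forall>A\<in>sets M. 0 < measure M A \<longrightarrow>
      (\<exists>B\<in>sets M. B \<subseteq> A \<and> 0 < measure M B \<and> measure M B < measure M A))"

definition unit_cube :: "(real^'d) set" where
  "unit_cube = cbox 0 One"

definition unif_cube :: "(real^'d) measure" where
  "unif_cube = uniform_measure lborel unit_cube"

definition mean_indep_zero :: "'a measure \<Rightarrow> ('a \<Rightarrow> real^'n) \<Rightarrow> ('a \<Rightarrow> 'b::topological_space) \<Rightarrow> bool" where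
  "mean_indep_zero M X V \<longleftrightarrow>
     (\<forall>i. AE \<omega> in M. real_cond_exp M (vimage_algebra (space M) V borel) (\<lambda>\<omega>. X \<omega> $ i) \<omega> = 0)"

definition feasible :: "'a measure \<Rightarrow> ('a \<Rightarrow> real^'n) \<Rightarrow> ('a \<Rightarrow> real^'d) \<Rightarrow> bool" where
  "feasible M X V \<longleftrightarrow> V \<in> borel_measurable M \<and> distr M lborel V = unif_cube \<and> mean_indep_zero M X V"

end

theory Submission
  imports Defs
begin

text \<open>For almost every value x of X the function u \<mapsto> \<phi> u + b u \<bullet> x is convex on the cube
  with gradient \<nabla>\<phi> u + Db(u)^T x, so the tangent inequality at U \<omega> gives, pointwise,
  V \<bullet> Y - U \<bullet> Y \<le> \<psi> V - \<psi> U with the potential \<psi> W = \<phi>(W) + b(W) \<bullet> X.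
  For every feasible W, the expectation of \<phi>(W) depends only on the law of W, which is uniform,
  and E(b(W) \<bullet> X) = 0 because E(X | W) = 0; hence E \<psi> V = E \<psi> U, and integrating gives
  E(V \<bullet> Y) \<le> E(U \<bullet> Y).\<close>

lemma convex_on_has_derivative_le:
  fixes f :: "'a::real_normed_vector \<Rightarrow> real"
  assumes convex: "convex_on S f" and x: "x \<in> S" and y: "y \<in> S"
    and deriv: "(f has_derivative f') (at x within S)"
  shows "f' (y - x) \<le> f y - f x"
proof -
  let ?h = "\<lambda>t::real. x + t *\<^sub>R (y - x)"
  have h_eq: "?h t = (1 - t) *\<^sub>R x + t *\<^sub>R y" for t by (simp add: algebra_simps)
  have "?h ` {0..1} \<subseteq> S"
    using convexD[OF convex_on_imp_convex[OF convex] x y] by (auto simp: h_eq)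
  then have "(f has_derivative f') (at (?h 0) within ?h ` {0..1})"
    using has_derivative_subset[OF deriv] by simp
  moreover have "(?h has_derivative (\<lambda>t. t *\<^sub>R (y - x))) (at 0 within {0..1})"
    by (auto intro!: derivative_eq_intros)
  ultimately have "((f \<circ> ?h) has_derivative (\<lambda>t. f' (y - x) * t)) (at 0 within {0..1})"
    using diff_chain_within linear_scale[OF has_derivative_linear[OF deriv]]
    by (fastforce simp: o_def mult.commute)
  then have "((\<lambda>t. (f (?h t) - f x) / t) \<longlongrightarrow> f' (y - x)) (at 0 within {0..1})"
    by (simp add: has_field_derivative_iff flip: has_field_derivative_def)
  moreover have "\<forall>\<^sub>F t in at 0 within {0..1}. (f (?h t) - f x) / t \<le> f y - f x"
    unfolding eventually_at_filter
  proof (intro always_eventually allI impI)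
    fix t :: real assume t: "t \<noteq> 0" "t \<in> {0..1}"
    then have "f (?h t) - f x \<le> t * (f y - f x)"
      using convex_onD[OF convex, of t x y] x y by (simp add: h_eq algebra_simps)
    then show "(f (?h t) - f x) / t \<le> f y - f x"
      using t by (simp add: divide_le_eq mult.commute)
  qed
  moreover have "at 0 within {0..1::real} \<noteq> bot"
    by (simp add: at_within_Icc_at_right)
  ultimately show ?thesis
    using tendsto_le tendsto_const by blast
qed

lemma inner_diff_le_of_convex_potential:
  fixes \<phi> :: "real^'d \<Rightarrow> real" and b :: "real^'d \<Rightarrow> real^'n" and x :: "real^'n"
  assumes convex: "convex_on S (\<lambda>u. \<phi> u + b u \<bullet> x)" and u: "u \<in> S" and v: "v \<in> S"
    and \<phi>_deriv: "(\<phi> has_derivative (\<lambda>h. g \<bullet> h)) (at u within S)"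
    and b_deriv: "(b has_derivative (\<lambda>h. D *v h)) (at u within S)"
  shows "v \<bullet> (g + transpose D *v x) - u \<bullet> (g + transpose D *v x)
           \<le> (\<phi> v + b v \<bullet> x) - (\<phi> u + b u \<bullet> x)"
proof -
  have "((\<lambda>u. \<phi> u + b u \<bullet> x) has_derivative (\<lambda>h. g \<bullet> h + (D *v h) \<bullet> x)) (at u within S)"
    using \<phi>_deriv has_derivative_inner_left[OF b_deriv] by (rule has_derivative_add)
  from convex_on_has_derivative_le[OF convex u v this]
  have "g \<bullet> (v - u) + (D *v (v - u)) \<bullet> x \<le> (\<phi> v + b v \<bullet> x) - (\<phi> u + b u \<bullet> x)" .
  moreover have "(D *v (v - u)) \<bullet> x = (transpose D *v x) \<bullet> (v - u)"
    by (metis dot_lmul_matrix inner_commute transpose_transpose vector_transpose_matrix)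
  ultimately show ?thesis
    by (simp add: algebra_simps inner_commute)
qed

lemma continuous_on_compact_bounded_borel_extension:
  fixes f :: "'a::t2_space \<Rightarrow> 'b::real_normed_vector"
  assumes "compact S" and "continuous_on S f"
  obtains g B where "g \<in> borel_measurable borel" and "\<And>u. u \<in> S \<Longrightarrow> g u = f u"
    and "\<And>u. norm (g u) \<le> B"
proof -
  obtain B where B: "0 \<le> B" "\<And>y. y \<in> f ` S \<Longrightarrow> norm y \<le> B"
    using compact_imp_bounded[OF compact_continuous_image[OF assms(2,1)]]
    unfolding bounded_pos by (meson less_imp_le)
  have "S \<in> sets borel" using assms(1) by (simp add: compact_imp_closed)
  then have "(\<lambda>u. indicator S u *\<^sub>R f u) \<in> borel_measurable borel"
    using assms(2) by (rule borel_measurable_continuous_on_indicator)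
  moreover have "norm (indicator S u *\<^sub>R f u) \<le> B" for u
    using B by (auto simp: indicator_def)
  ultimately show ?thesis
    by (intro that[of "\<lambda>u. indicator S u *\<^sub>R f u" B]) auto
qed

lemma AE_in_unit_cube_if_distr_unif_cube:
  fixes W :: "'a \<Rightarrow> real^'d"
  assumes "W \<in> borel_measurable M" and "distr M lborel W = unif_cube"
  shows "AE \<omega> in M. W \<omega> \<in> unit_cube"
proof -
  have "AE u in unif_cube. u \<in> (unit_cube :: (real^'d) set)"
    unfolding unif_cube_def unit_cube_def by (rule AE_uniform_measureI) auto
  then have "AE u in distr M lborel W. u \<in> unit_cube"
    unfolding assms(2) .
  then show ?thesis
    using assms(1) by (intro AE_distrD[of W M lborel]) simp_all
qed

lemma integrable_bounded_mult:
  fixes f g :: "'a \<Rightarrow> real"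
  assumes "integrable M f" and "g \<in> borel_measurable M" and "\<And>x. \<bar>g x\<bar> \<le> B"
  shows "integrable M (\<lambda>x. g x * f x)"
proof (rule Bochner_Integration.integrable_bound[of _ "\<lambda>x. B * f x"])
  show "integrable M (\<lambda>x. B * f x)" using assms(1) by simp
  have "\<bar>g x * f x\<bar> \<le> \<bar>B * f x\<bar>" for x
  proof -
    have "\<bar>g x * f x\<bar> \<le> B * \<bar>f x\<bar>"
      using assms(3)[of x] by (simp add: abs_mult mult_right_mono)
    also have "\<dots> \<le> \<bar>B\<bar> * \<bar>f x\<bar>" by (rule mult_right_mono) auto
    also have "\<dots> = \<bar>B * f x\<bar>" by (simp add: abs_mult)
    finally show ?thesis .
  qed
  then show "AE x in M. norm (g x * f x) \<le> norm (B * f x)" by simp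
  show "(\<lambda>x. g x * f x) \<in> borel_measurable M"
    by (rule borel_measurable_times[OF assms(2) borel_measurable_integrable[OF assms(1)]])
qed

lemma mean_indep_zero_integral_mult:
  fixes X :: "'a \<Rightarrow> real^'n" and W :: "'a \<Rightarrow> 'b::topological_space" and g :: "'b \<Rightarrow> real"
  assumes "finite_measure M" and indep: "mean_indep_zero M X W"
    and W: "W \<in> borel_measurable M" and X: "integrable M X"
    and g: "g \<in> borel_measurable borel" and g_bound: "\<And>u. \<bar>g u\<bar> \<le> B"
  shows "integrable M (\<lambda>\<omega>. g (W \<omega>) * X \<omega> $ i)"
    and "(\<integral>\<omega>. g (W \<omega>) * X \<omega> $ i \<partial>M) = 0"
proof -
  interpret finite_measure M by fact
  define F where "F = vimage_algebra (space M) W borel"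
  have "subalgebra M F"
    using W by (auto simp: subalgebra_def F_def sets_vimage_algebra2 measurable_def)
  then interpret finite_measure_subalgebra M F
    by unfold_locales
  have "W \<in> measurable F borel"
    unfolding F_def by (rule measurable_vimage_algebra1) simp
  then have gW_F: "(\<lambda>\<omega>. g (W \<omega>)) \<in> borel_measurable F"
    using g by (rule measurable_compose)
  have Xi: "integrable M (\<lambda>\<omega>. X \<omega> $ i)"
    using integrable_bounded_linear[OF bounded_linear_vec_nth X] .
  show int: "integrable M (\<lambda>\<omega>. g (W \<omega>) * X \<omega> $ i)"
    using integrable_bounded_mult[OF Xi measurable_compose[OF W g] g_bound] .
  have "AE \<omega> in M. real_cond_exp M F (\<lambda>\<omega>. X \<omega> $ i) \<omega> = 0"
    using indep unfolding mean_indep_zero_def F_def by simp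
  have "(\<integral>\<omega>. g (W \<omega>) * X \<omega> $ i \<partial>M)
      = (\<integral>\<omega>. g (W \<omega>) * real_cond_exp M F (\<lambda>\<omega>. X \<omega> $ i) \<omega> \<partial>M)"
    by (rule real_cond_exp_intg(2)[OF int gW_F borel_measurable_integrable[OF Xi], symmetric])
  also have "\<dots> = 0"
    using \<open>AE \<omega> in M. real_cond_exp M F (\<lambda>\<omega>. X \<omega> $ i) \<omega> = 0\<close>
    by (intro integral_eq_zero_AE) (auto elim: eventually_mono)
  finally show "(\<integral>\<omega>. g (W \<omega>) * X \<omega> $ i \<partial>M) = 0" .
qed

lemma mean_indep_zero_integral_inner:
  fixes X :: "'a \<Rightarrow> real^'n" and W :: "'a \<Rightarrow> 'b::topological_space" and q :: "'b \<Rightarrow> real^'n"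
  assumes "finite_measure M" and "mean_indep_zero M X W"
    and "W \<in> borel_measurable M" and "integrable M X"
    and q: "q \<in> borel_measurable borel" and q_bound: "\<And>u. norm (q u) \<le> B"
  shows "integrable M (\<lambda>\<omega>. q (W \<omega>) \<bullet> X \<omega>)"
    and "(\<integral>\<omega>. q (W \<omega>) \<bullet> X \<omega> \<partial>M) = 0"
proof -
  have "(\<lambda>u. q u $ i) \<in> borel_measurable borel" for i
    by (rule borel_measurable_continuous_on[OF _ q]) (intro continuous_intros)
  moreover have "\<bar>q u $ i\<bar> \<le> B" for u i
    using component_le_norm_cart[of "q u" i] q_bound[of u] by linarith
  ultimately have component:
      "integrable M (\<lambda>\<omega>. q (W \<omega>) $ i * X \<omega> $ i)"
      "(\<integral>\<omega>. q (W \<omega>) $ i * X \<omega> $ i \<partial>M) = 0" for i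
    using mean_indep_zero_integral_mult[OF assms(1-4)] by blast+
  have inner_sum: "(\<lambda>\<omega>. q (W \<omega>) \<bullet> X \<omega>) = (\<lambda>\<omega>. \<Sum>i\<in>UNIV. q (W \<omega>) $ i * X \<omega> $ i)"
    by (simp add: inner_vec_def)
  show "integrable M (\<lambda>\<omega>. q (W \<omega>) \<bullet> X \<omega>)"
    unfolding inner_sum using component by auto
  show "(\<integral>\<omega>. q (W \<omega>) \<bullet> X \<omega> \<partial>M) = 0"
    unfolding inner_sum using component by (simp add: integral_sum)
qed

lemma feasible_integrable_inner:
  fixes X :: "'a \<Rightarrow> real^'n" and V Y :: "'a \<Rightarrow> real^'d"
  assumes "finite_measure M" and "feasible M X V"
    and Y: "Y \<in> borel_measurable M" and Y_square: "integrable M (\<lambda>\<omega>. (norm (Y \<omega>))\<^sup>2)"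
  shows "integrable M (\<lambda>\<omega>. V \<omega> \<bullet> Y \<omega>)"
proof -
  interpret finite_measure M by fact
  have V: "V \<in> borel_measurable M" and law: "distr M lborel V = unif_cube"
    using assms(2) by (simp_all add: feasible_def)
  note V_cube = AE_in_unit_cube_if_distr_unif_cube[OF V law]
  have "bounded (unit_cube :: (real^'d) set)"
    unfolding unit_cube_def by (rule bounded_cbox)
  then obtain C where C: "\<And>u. u \<in> (unit_cube :: (real^'d) set) \<Longrightarrow> norm u \<le> C"
    unfolding bounded_iff by blast
  have Y_int: "integrable M (\<lambda>\<omega>. norm (Y \<omega>))"
    using Y by (intro square_integrable_imp_integrable[OF _ Y_square]) measurable
  show ?thesis
  proof (rule Bochner_Integration.integrable_bound[of _ "\<lambda>\<omega>. C * norm (Y \<omega>)"])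
    show "integrable M (\<lambda>\<omega>. C * norm (Y \<omega>))"
      using Y_int by simp
    show "AE \<omega> in M. norm (V \<omega> \<bullet> Y \<omega>) \<le> norm (C * norm (Y \<omega>))"
      using V_cube
    proof eventually_elim
      case (elim \<omega>)
      have "\<bar>V \<omega> \<bullet> Y \<omega>\<bar> \<le> norm (V \<omega>) * norm (Y \<omega>)" by (rule Cauchy_Schwarz_ineq2)
      also have "\<dots> \<le> \<bar>C\<bar> * norm (Y \<omega>)"
        using C[OF elim] by (simp add: mult_right_mono)
      finally show ?case by (simp add: abs_mult)
    qed
    show "(\<lambda>\<omega>. V \<omega> \<bullet> Y \<omega>) \<in> borel_measurable M"
      using V Y by measurable
  qed
qed

lemma feasible_integral_potential:
  fixes X :: "'a \<Rightarrow> real^'n" and V :: "'a \<Rightarrow> real^'d"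
    and p :: "real^'d \<Rightarrow> real" and q :: "real^'d \<Rightarrow> real^'n"
  assumes "finite_measure M" and "integrable M X" and "feasible M X V"
    and p: "p \<in> borel_measurable borel" and p_bound: "\<And>u. norm (p u) \<le> Bp"
    and q: "q \<in> borel_measurable borel" and q_bound: "\<And>u. norm (q u) \<le> Bq"
  shows "integrable M (\<lambda>\<omega>. p (V \<omega>) + q (V \<omega>) \<bullet> X \<omega>)"
    and "(\<integral>\<omega>. p (V \<omega>) + q (V \<omega>) \<bullet> X \<omega> \<partial>M) = (\<integral>u. p u \<partial>unif_cube)"
proof -
  interpret finite_measure M by fact
  have V: "V \<in> borel_measurable M" and law: "distr M lborel V = unif_cube"
    and indep: "mean_indep_zero M X V"
    using assms(3) by (simp_all add: feasible_def)
  have p_int: "integrable M (\<lambda>\<omega>. p (V \<omega>))"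
    using p_bound by (intro integrable_const_bound[of _ Bp] measurable_compose[OF V p]) simp
  note q_int = mean_indep_zero_integral_inner[OF assms(1) indep V assms(2) q q_bound]
  show "integrable M (\<lambda>\<omega>. p (V \<omega>) + q (V \<omega>) \<bullet> X \<omega>)"
    using p_int q_int(1) by (rule Bochner_Integration.integrable_add)
  have "(\<integral>\<omega>. p (V \<omega>) + q (V \<omega>) \<bullet> X \<omega> \<partial>M)
      = (\<integral>\<omega>. p (V \<omega>) \<partial>M) + (\<integral>\<omega>. q (V \<omega>) \<bullet> X \<omega> \<partial>M)"
    using p_int q_int(1) by (rule Bochner_Integration.integral_add)
  also have "\<dots> = (\<integral>u. p u \<partial>distr M lborel V)"
    using V p q_int(2) by (simp add: integral_distr)
  finally show "(\<integral>\<omega>. p (V \<omega>) + q (V \<omega>) \<bullet> X \<omega> \<partial>M) = (\<integral>u. p u \<partial>unif_cube)"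
    unfolding law .
qed

lemma feasible_integral_inner_le:
  fixes X :: "'a \<Rightarrow> real^'n" and Y U V :: "'a \<Rightarrow> real^'d"
    and p :: "real^'d \<Rightarrow> real" and q :: "real^'d \<Rightarrow> real^'n"
  assumes "finite_measure M" and "integrable M X"
    and "Y \<in> borel_measurable M" and "integrable M (\<lambda>\<omega>. (norm (Y \<omega>))\<^sup>2)"
    and p: "p \<in> borel_measurable borel" "\<And>u. norm (p u) \<le> Bp"
    and q: "q \<in> borel_measurable borel" "\<And>u. norm (q u) \<le> Bq"
    and U: "feasible M X U" and V: "feasible M X V"
    and le: "AE \<omega> in M. V \<omega> \<bullet> Y \<omega> - U \<omega> \<bullet> Y \<omega>
               \<le> (p (V \<omega>) + q (V \<omega>) \<bullet> X \<omega>) - (p (U \<omega>) + q (U \<omega>) \<bullet> X \<omega>)"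
  shows "(\<integral>\<omega>. V \<omega> \<bullet> Y \<omega> \<partial>M) \<le> (\<integral>\<omega>. U \<omega> \<bullet> Y \<omega> \<partial>M)"
proof -
  define P where "P W = (\<lambda>\<omega>. p (W \<omega>) + q (W \<omega>) \<bullet> X \<omega>)" for W
  have P_int: "integrable M (P W)" and P_integral: "(\<integral>\<omega>. P W \<omega> \<partial>M) = (\<integral>u. p u \<partial>unif_cube)"
    if "feasible M X W" for W
    using feasible_integral_potential[OF assms(1,2) that p q] by (simp_all add: P_def)
  note inner_int = feasible_integrable_inner[OF assms(1) _ assms(3,4)]
  have "AE \<omega> in M. V \<omega> \<bullet> Y \<omega> \<le> U \<omega> \<bullet> Y \<omega> + (P V \<omega> - P U \<omega>)"
    using le by (rule eventually_mono) (simp add: P_def)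
  then have "(\<integral>\<omega>. V \<omega> \<bullet> Y \<omega> \<partial>M) \<le> (\<integral>\<omega>. U \<omega> \<bullet> Y \<omega> + (P V \<omega> - P U \<omega>) \<partial>M)"
    using inner_int[OF V] inner_int[OF U] P_int[OF V] P_int[OF U]
    by (intro integral_mono_AE) auto
  also have "\<dots> = (\<integral>\<omega>. U \<omega> \<bullet> Y \<omega> \<partial>M) + ((\<integral>\<omega>. P V \<omega> \<partial>M) - (\<integral>\<omega>. P U \<omega> \<partial>M))"
    using inner_int[OF U] P_int[OF V] P_int[OF U] by simp
  also have "\<dots> = (\<integral>\<omega>. U \<omega> \<bullet> Y \<omega> \<partial>M)"
    using P_integral[OF V] P_integral[OF U] by simp
  finally show ?thesis .
qed

theorem mainTheorem1:
  fixes M :: "'a measure"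
    and X :: "'a \<Rightarrow> real^'n" and Y :: "'a \<Rightarrow> real^'d" and U :: "'a \<Rightarrow> real^'d"
    and \<phi> :: "real^'d \<Rightarrow> real" and b :: "real^'d \<Rightarrow> real^'n"
    and grad_\<phi> :: "real^'d \<Rightarrow> real^'d" and Db :: "real^'d \<Rightarrow> real^'d^'n"
  assumes "prob_space M" and "nonatomic M"
    and "X \<in> borel_measurable M" and "integrable M X" and "(\<integral>\<omega>. X \<omega> \<partial>M) = 0"
    and "Y \<in> borel_measurable M" and "integrable M (\<lambda>\<omega>. (norm (Y \<omega>))\<^sup>2)"
    and phi_deriv: "\<And>u. u \<in> unit_cube \<Longrightarrow>
           (\<phi> has_derivative (\<lambda>h. grad_\<phi> u \<bullet> h)) (at u within unit_cube)"
    and b_deriv: "\<And>u. u \<in> unit_cube \<Longrightarrow>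
           (b has_derivative (\<lambda>h. Db u *v h)) (at u within unit_cube)"
    and "continuous_on unit_cube grad_\<phi>" and "continuous_on unit_cube Db"
    and convex: "AE x in distr M lborel X. convex_on unit_cube (\<lambda>u. \<phi> u + b u \<bullet> x)"
    and "U \<in> borel_measurable M" and "distr M lborel U = unif_cube" and "mean_indep_zero M X U"
    and "AE \<omega> in M. Y \<omega> = grad_\<phi> (U \<omega>) + transpose (Db (U \<omega>)) *v X \<omega>"
  shows "feasible M X U \<and>
         (\<forall>V. feasible M X V \<longrightarrow> (\<integral>\<omega>. V \<omega> \<bullet> Y \<omega> \<partial>M) \<le> (\<integral>\<omega>. U \<omega> \<bullet> Y \<omega> \<partial>M))"
proof -
  interpret prob_space M by fact
  have U_feasible: "feasible M X U"
    using assms(13-15) by (simp add: feasible_def)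
  have cube: "compact (unit_cube :: (real^'d) set)"
    unfolding unit_cube_def by (rule compact_cbox)
  have "continuous_on unit_cube \<phi>"
    using phi_deriv has_derivative_continuous continuous_on_eq_continuous_within by blast
  then obtain p Bp where p: "p \<in> borel_measurable borel"
      and p_eq: "\<And>u. u \<in> unit_cube \<Longrightarrow> p u = \<phi> u" and p_bound: "\<And>u. norm (p u) \<le> Bp"
    using continuous_on_compact_bounded_borel_extension[OF cube] by blast
  have "continuous_on unit_cube b"
    using b_deriv has_derivative_continuous continuous_on_eq_continuous_within by blast
  then obtain q Bq where q: "q \<in> borel_measurable borel"
      and q_eq: "\<And>u. u \<in> unit_cube \<Longrightarrow> q u = b u" and q_bound: "\<And>u. norm (q u) \<le> Bq"
    using continuous_on_compact_bounded_borel_extension[OF cube] by blast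
  have in_cube: "AE \<omega> in M. W \<omega> \<in> unit_cube" if "feasible M X W" for W
    using that by (intro AE_in_unit_cube_if_distr_unif_cube) (simp_all add: feasible_def)
  have "(\<integral>\<omega>. V \<omega> \<bullet> Y \<omega> \<partial>M) \<le> (\<integral>\<omega>. U \<omega> \<bullet> Y \<omega> \<partial>M)" if V: "feasible M X V" for V
  proof (rule feasible_integral_inner_le[OF finite_measure_axioms assms(4,6,7) p p_bound q q_bound U_feasible V])
    have "AE \<omega> in M. convex_on unit_cube (\<lambda>u. \<phi> u + b u \<bullet> X \<omega>)"
      using assms(3) by (intro AE_distrD[OF _ convex]) simp
    then show "AE \<omega> in M. V \<omega> \<bullet> Y \<omega> - U \<omega> \<bullet> Y \<omega>
        \<le> (p (V \<omega>) + q (V \<omega>) \<bullet> X \<omega>) - (p (U \<omega>) + q (U \<omega>) \<bullet> X \<omega>)"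
      using in_cube[OF V] in_cube[OF U_feasible] assms(16)
    proof eventually_elim
      case (elim \<omega>)
      then show ?case
        using inner_diff_le_of_convex_potential[OF elim(1,3,2) phi_deriv b_deriv, OF elim(3,3)]
        by (simp add: p_eq q_eq)
    qed
  qed
  with U_feasible show ?thesis by blast
qed

end
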